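(* Let $M'=M[D,K]$ be a compatible minor of the weighted uncertainty matroid $\mathcal{M}$. Let $e$ be a non-trivial element of $M'$ such that (i) there exists a circuit $C$ of $M'$ with $e\in C$, (ii) $w_e=L_e$, (iii) $e$ has maximum weight in $C$, and (iv) $e$ has maximum query cost in $C\cap E^L_{w_e}$. Then $M[D\cup\{e\},K]$ is a compatible minor of $\mathcal{M}$.
   Context: A weighted uncertainty matroid $\mathcal{M}=(E,\mathcal{I},A,w)$ consists of a matroid $M=(E,\mathcal{I})$ on a finite set $E$, for each $e\in E$ a non-empty finite union $A_e$ of bounded real intervals (each open or closed), a weight $w_e\in A_e$, and a query cost $c_e\ge0$. $L_e=\inf A_e$, $U_e=\sup A_e$; $e$ is trivial if $A_e=\{w_e\}$. For a real $x$, $E^L_x=\{e\in E: L_e=x \text{ and } e \text{ non-trivial}\}$. A minimum-weight basis (MWB) is a basis minimizing total weight. A weight assignment is $w^*$ with $w^*_e\in A_e$, consistent with $Q$ if $w^*_e=w_e$ on $Q$. $Q$ verifies an MWB $B$ if for every weight assignment consistent with $Q$, $B$ is an MWB with respect to it; a certificate for $\mathcal{M}$ is a set verifying some MWB, and $c^*$ denotes the minimum cost $\sum_{e\in Q}c_e$ of a certificate for $\mathcal{M}$. For $D,K\subseteq E$, $M[D,K]$ is the matroid obtained from $M$ by deleting $D$ and contracting $K$, ground set $E\setminus(D\cup K)$, weights restricted. $M[D,K]$ is a compatible minor if there is a set $Q$ of cost $c^*$ verifying an MWB $B$ of $\mathcal{M}$ with $K\subseteq B$, $D\cap B=\emptyset$.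 *)

theory Defs
  imports Main "HOL.Real"
begin

definition matroid :: "'a set \<Rightarrow> ('a set \<Rightarrow> bool) \<Rightarrow> bool" where
  "matroid E indep \<longleftrightarrow>
     finite E \<and> indep {} \<and> (\<forall>I. indep I \<longrightarrow> I \<subseteq> E) \<and>
     (\<forall>I J. indep J \<and> I \<subseteq> J \<longrightarrow> indep I) \<and>
     (\<forall>I J. indep I \<and> indep J \<and> card I < card J \<longrightarrow> (\<exists>x\<in>J - I. indep (insert x I)))"

definition basis_of :: "('a set \<Rightarrow> bool) \<Rightarrow> 'a set \<Rightarrow> 'a set \<Rightarrow> bool" where
  "basis_of indep X B \<longleftrightarrow> B \<subseteq> X \<and> indep B \<and>
     (\<forall>B'. B \<subseteq> B' \<and> B' \<subseteq> X \<and> indep B' \<longrightarrow> B' = B)"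

definition circuit_of :: "'a set \<Rightarrow> ('a set \<Rightarrow> bool) \<Rightarrow> 'a set \<Rightarrow> bool" where
  "circuit_of E indep C \<longleftrightarrow> C \<subseteq> E \<and> \<not> indep C \<and> (\<forall>x\<in>C. indep (C - {x}))"

text \<open>Independence predicate of the minor M[D,K] = (M \ D) / K, ground set E - (D \<union> K):
  I is independent iff I \<union> J is independent in M for a maximal independent subset J of K.\<close>
definition minor_indep :: "'a set \<Rightarrow> ('a set \<Rightarrow> bool) \<Rightarrow> 'a set \<Rightarrow> 'a set \<Rightarrow> 'a set \<Rightarrow> bool" where
  "minor_indep E indep D K I \<longleftrightarrow> I \<subseteq> E - (D \<union> K) \<and>
     (\<exists>J. basis_of indep K J \<and> indep (I \<union> J))"

definition unc_interval :: "real set \<Rightarrow> bool" where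
  "unc_interval S \<longleftrightarrow> (\<exists>a b. a \<le> b \<and> S = {a..b}) \<or> (\<exists>a b. a < b \<and> S = {a<..<b})"

definition unc_area :: "real set \<Rightarrow> bool" where
  "unc_area S \<longleftrightarrow> (\<exists>F. finite F \<and> F \<noteq> {} \<and> (\<forall>I\<in>F. unc_interval I) \<and> S = \<Union>F)"

definition wu_matroid :: "'a set \<Rightarrow> ('a set \<Rightarrow> bool) \<Rightarrow> ('a \<Rightarrow> real set) \<Rightarrow> ('a \<Rightarrow> real) \<Rightarrow> ('a \<Rightarrow> real) \<Rightarrow> bool" where
  "wu_matroid E indep A w c \<longleftrightarrow> matroid E indep \<and>
     (\<forall>e\<in>E. unc_area (A e) \<and> w e \<in> A e \<and> c e \<ge> 0)"

definition lower :: "('a \<Rightarrow> real set) \<Rightarrow> 'a \<Rightarrow> real" where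
  "lower A e = Inf (A e)"

definition upper :: "('a \<Rightarrow> real set) \<Rightarrow> 'a \<Rightarrow> real" where
  "upper A e = Sup (A e)"

definition trivial :: "('a \<Rightarrow> real set) \<Rightarrow> ('a \<Rightarrow> real) \<Rightarrow> 'a \<Rightarrow> bool" where
  "trivial A w e \<longleftrightarrow> A e = {w e}"

definition EL :: "'a set \<Rightarrow> ('a \<Rightarrow> real set) \<Rightarrow> ('a \<Rightarrow> real) \<Rightarrow> real \<Rightarrow> 'a set" where
  "EL E A w x = {e\<in>E. lower A e = x \<and> \<not> trivial A w e}"

definition is_mwb :: "'a set \<Rightarrow> ('a set \<Rightarrow> bool) \<Rightarrow> ('a \<Rightarrow> real) \<Rightarrow> 'a set \<Rightarrow> bool" where
  "is_mwb E indep w' B \<longleftrightarrow> basis_of indep E B \<and>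
     (\<forall>B'. basis_of indep E B' \<longrightarrow> sum w' B \<le> sum w' B')"

definition weight_assignment :: "'a set \<Rightarrow> ('a \<Rightarrow> real set) \<Rightarrow> ('a \<Rightarrow> real) \<Rightarrow> bool" where
  "weight_assignment E A w' \<longleftrightarrow> (\<forall>e\<in>E. w' e \<in> A e)"

definition consistent :: "('a \<Rightarrow> real) \<Rightarrow> 'a set \<Rightarrow> ('a \<Rightarrow> real) \<Rightarrow> bool" where
  "consistent w Q w' \<longleftrightarrow> (\<forall>e\<in>Q. w' e = w e)"

definition verifies :: "'a set \<Rightarrow> ('a set \<Rightarrow> bool) \<Rightarrow> ('a \<Rightarrow> real set) \<Rightarrow> ('a \<Rightarrow> real) \<Rightarrow> 'a set \<Rightarrow> 'a set \<Rightarrow> bool" where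
  "verifies E indep A w Q B \<longleftrightarrow>
     (\<forall>w'. weight_assignment E A w' \<and> consistent w Q w' \<longrightarrow> is_mwb E indep w' B)"

definition certificate :: "'a set \<Rightarrow> ('a set \<Rightarrow> bool) \<Rightarrow> ('a \<Rightarrow> real set) \<Rightarrow> ('a \<Rightarrow> real) \<Rightarrow> 'a set \<Rightarrow> bool" where
  "certificate E indep A w Q \<longleftrightarrow> Q \<subseteq> E \<and> (\<exists>B. verifies E indep A w Q B)"

definition c_star :: "'a set \<Rightarrow> ('a set \<Rightarrow> bool) \<Rightarrow> ('a \<Rightarrow> real set) \<Rightarrow> ('a \<Rightarrow> real) \<Rightarrow> ('a \<Rightarrow> real) \<Rightarrow> real" where
  "c_star E indep A w c = Min {sum c Q | Q. certificate E indep A w Q}"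

definition compatible_minor :: "'a set \<Rightarrow> ('a set \<Rightarrow> bool) \<Rightarrow> ('a \<Rightarrow> real set) \<Rightarrow> ('a \<Rightarrow> real) \<Rightarrow> ('a \<Rightarrow> real) \<Rightarrow> 'a set \<Rightarrow> 'a set \<Rightarrow> bool" where
  "compatible_minor E indep A w c D K \<longleftrightarrow> D \<subseteq> E \<and> K \<subseteq> E \<and>
     (\<exists>Q B. Q \<subseteq> E \<and> sum c Q = c_star E indep A w c \<and> verifies E indep A w Q B \<and>
            K \<subseteq> B \<and> D \<inter> B = {})"

end

theory Submission
  imports Defs
begin

text \<open>Let \<open>Q\<close> be an optimal certificate verifying an MWB \<open>B\<close> with \<open>K \<subseteq> B\<close> and \<open>D \<inter> B = {}\<close>;
  only the case \<open>e \<in> B\<close> needs work. Since \<open>e\<close> lies on a circuit \<open>C\<close> of \<open>M[D,K]\<close>, some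
  \<open>f \<in> C - B\<close> makes \<open>B - e + f\<close> a basis, so every weight assignment consistent with \<open>Q\<close>
  satisfies \<open>w'\<^sub>e \<le> w'\<^sub>f\<close>. As \<open>e\<close> is maximal in \<open>C\<close> and sits at its lower limit, this
  forces \<open>e \<in> Q\<close>, \<open>w\<^sub>f = w\<^sub>e\<close>, and \<open>f \<in> EL E A w (w e)\<close> unless \<open>f\<close> is queried or trivial.
  Hence replacing \<open>e\<close> by \<open>f\<close> in \<open>Q\<close> verifies \<open>B - e + f\<close> at no extra cost, by (iv).\<close>

lemma ex_maximal_indep_superset:
  assumes "finite X" "indep I" "I \<subseteq> X"
  shows "\<exists>S. I \<subseteq> S \<and> S \<subseteq> X \<and> indep S \<and> (\<forall>x\<in>X - S. \<not> indep (insert x S))"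
proof -
  let ?P = "\<lambda>S. I \<subseteq> S \<and> S \<subseteq> X \<and> indep S"
  have "\<forall>S. ?P S \<longrightarrow> card S < card X + 1"
    using assms(1) by (simp add: card_mono less_Suc_eq_le)
  then obtain S where S: "?P S" "\<forall>T. ?P T \<longrightarrow> card T \<le> card S"
    using ex_has_greatest_nat[of ?P I card "card X + 1"] assms by blast
  have "finite S" using S assms(1) finite_subset by blast
  then have "\<not> indep (insert x S)" if "x \<in> X - S" for x
    using S that by (metis DiffD1 DiffD2 card_insert_disjoint insert_subset
        not_less_eq_eq order_refl subset_insertI2)
  then show ?thesis using S by blast
qed

lemma basis_of_if_card_eq:
  assumes "matroid E indep" "basis_of indep E B" "indep B'" "card B' = card B"
  shows "basis_of indep E B'"
proof -
  have fin: "finite E" and sub: "\<And>I. indep I \<Longrightarrow> I \<subseteq> E"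
    and aug: "\<And>I J. indep I \<Longrightarrow> indep J \<Longrightarrow> card I < card J \<Longrightarrow> \<exists>x\<in>J - I. indep (insert x I)"
    using assms(1) unfolding matroid_def by blast+
  have B: "indep B" "\<And>B''. B \<subseteq> B'' \<Longrightarrow> B'' \<subseteq> E \<Longrightarrow> indep B'' \<Longrightarrow> B'' = B"
    using assms(2) unfolding basis_of_def by auto
  have "B'' = B'" if larger: "B' \<subseteq> B''" "indep B''" for B''
  proof (rule ccontr)
    assume "B'' \<noteq> B'"
    with larger have "card B < card B''"
      using assms(4) fin sub by (metis psubsetI psubset_card_mono rev_finite_subset)
    then obtain x where "x \<in> B'' - B" "indep (insert x B)" using aug B(1) larger(2) by blast
    then show False using B(2)[of "insert x B"] sub by blast
  qed
  then show ?thesis unfolding basis_of_def using assms(3) sub by blast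
qed

text \<open>Extend \<open>(C - e) \<union> K\<close> to a maximal independent \<open>S\<close> within \<open>(C - e) \<union> K \<union> (B - e)\<close>.
  Without an exchange element \<open>|S| = |B| - 1\<close>, so augmenting \<open>S\<close> from \<open>B\<close> can only add \<open>e\<close>,
  which would make \<open>C \<union> K\<close> independent.\<close>

lemma indep_exchange_circuit:
  assumes "matroid E indep" "basis_of indep E B" "e \<in> B" "K \<subseteq> B - {e}" "C \<subseteq> E"
    "indep ((C - {e}) \<union> K)" "\<not> indep (C \<union> K)"
  shows "\<exists>f\<in>C - B. indep (insert f (B - {e}))"
proof (rule ccontr)
  assume no_exchange: "\<not> (\<exists>f\<in>C - B. indep (insert f (B - {e})))"
  have fin: "finite E"
    and dc: "\<And>I J. indep J \<Longrightarrow> I \<subseteq> J \<Longrightarrow> indep I"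
    and aug: "\<And>I J. indep I \<Longrightarrow> indep J \<Longrightarrow> card I < card J \<Longrightarrow> \<exists>x\<in>J - I. indep (insert x I)"
    using assms(1) unfolding matroid_def by blast+
  have B: "B \<subseteq> E" "indep B" using assms(2) unfolding basis_of_def by auto
  then have "finite B" using fin finite_subset by blast
  define B0 where "B0 = B - {e}"
  define I where "I = (C - {e}) \<union> K"
  have B0: "indep B0" unfolding B0_def by (rule dc[OF B(2)]) blast
  have "I \<union> B0 \<subseteq> E" unfolding I_def B0_def using assms(4,5) B(1) by blast
  then have "finite (I \<union> B0)" using fin by (rule finite_subset)
  then obtain S where S: "I \<subseteq> S" "S \<subseteq> I \<union> B0" "indep S"
      "\<forall>x\<in>(I \<union> B0) - S. \<not> indep (insert x S)"
    using ex_maximal_indep_superset[of "I \<union> B0" indep I] assms(6) unfolding I_def by blast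
  have "\<not> card S < card B0"
    using aug[OF S(3) B0] S(4) by blast
  moreover have "\<not> card B0 < card S"
  proof
    assume "card B0 < card S"
    then obtain x where "x \<in> S - B0" "indep (insert x B0)" using aug[OF B0 S(3)] by blast
    moreover from this have "x \<in> C - B" using S(2) assms(4) unfolding I_def B0_def by blast
    ultimately show False using no_exchange unfolding B0_def by blast
  qed
  moreover have "card B0 = card B - 1" "card B > 0"
    unfolding B0_def using \<open>finite B\<close> assms(3) card_gt_0_iff by auto
  ultimately have "card S < card B" by linarith
  then obtain x where x: "x \<in> B - S" "indep (insert x S)"
    using aug[OF S(3) B(2)] by blast
  then have "x = e" using S(4) unfolding B0_def by blast
  then have "C \<union> K \<subseteq> insert x S" using S(1) unfolding I_def by blast
  then show False using dc x(2) assms(7) by blast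
qed

lemma minor_indep_iff:
  assumes "indep K"
  shows "minor_indep E indep D K I \<longleftrightarrow> I \<subseteq> E - (D \<union> K) \<and> indep (I \<union> K)"
proof -
  have "basis_of indep K J \<longleftrightarrow> J = K" for J
    using assms unfolding basis_of_def by auto
  then show ?thesis unfolding minor_indep_def by simp
qed

lemma minor_circuit_basis_exchange:
  assumes mat: "matroid E indep" and B: "basis_of indep E B" and "K \<subseteq> B"
    and C: "circuit_of (E - (D \<union> K)) (minor_indep E indep D K) C" and "e \<in> C" "e \<in> B"
  shows "\<exists>f\<in>C - B. basis_of indep E (insert f (B - {e}))"
proof -
  have fin: "finite E" and dc: "\<And>I J. indep J \<Longrightarrow> I \<subseteq> J \<Longrightarrow> indep I"
    using mat unfolding matroid_def by blast+
  have "B \<subseteq> E" "indep B" using B unfolding basis_of_def by auto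
  then have "indep K" using dc \<open>K \<subseteq> B\<close> by blast
  have C_sub: "C \<subseteq> E - (D \<union> K)" and C_dep: "\<not> minor_indep E indep D K C"
    and C_min: "minor_indep E indep D K (C - {e})"
    using C \<open>e \<in> C\<close> unfolding circuit_of_def by auto
  have "indep ((C - {e}) \<union> K)" "\<not> indep (C \<union> K)"
    using C_sub C_dep C_min minor_indep_iff[of indep K, OF \<open>indep K\<close>] by auto
  moreover have "K \<subseteq> B - {e}" "C \<subseteq> E" using C_sub \<open>K \<subseteq> B\<close> \<open>e \<in> C\<close> by auto
  ultimately obtain f where f: "f \<in> C - B" "indep (insert f (B - {e}))"
    using indep_exchange_circuit[OF mat B \<open>e \<in> B\<close>] by blast
  have "finite B" using \<open>B \<subseteq> E\<close> fin by (rule finite_subset)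
  then have "card (insert f (B - {e})) = card B"
    using f(1) \<open>e \<in> B\<close> by (metis Diff_iff card_Suc_Diff1 card_insert_disjoint finite_Diff)
  then show ?thesis using basis_of_if_card_eq[OF mat B f(2)] f(1) by blast
qed

lemma unc_area_bdd_below:
  assumes "unc_area S" shows "bdd_below S"
proof -
  obtain F where F: "finite F" "\<forall>I\<in>F. unc_interval I" "S = \<Union>F"
    using assms unfolding unc_area_def by blast
  have "\<forall>I\<in>F. bdd_below I" using F(2) unfolding unc_interval_def by auto
  then show ?thesis using F(1,3) bdd_below_UN[of F "\<lambda>I. I"] by simp
qed

lemma lower_le: "unc_area (A x) \<Longrightarrow> y \<in> A x \<Longrightarrow> lower A x \<le> y"
  unfolding lower_def by (simp add: cInf_lower unc_area_bdd_below)

lemma weight_assignment_upd: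
  "weight_assignment E A w \<Longrightarrow> y \<in> A x \<Longrightarrow> weight_assignment E A (w(x := y))"
  unfolding weight_assignment_def by simp

lemma consistent_upd: "x \<notin> Q \<Longrightarrow> consistent w Q (w(x := y))"
  unfolding consistent_def by simp

lemma verifies_imp_basis:
  "weight_assignment E A w \<Longrightarrow> verifies E indep A w Q B \<Longrightarrow> basis_of indep E B"
  unfolding verifies_def consistent_def is_mwb_def by blast

lemma c_star_le:
  assumes "finite E" "certificate E indep A w Q"
  shows "c_star E indep A w c \<le> sum c Q"
proof -
  have "{sum c Q | Q. certificate E indep A w Q} \<subseteq> sum c ` Pow E"
    unfolding certificate_def by auto
  then have "finite {sum c Q | Q. certificate E indep A w Q}"
    using assms(1) by (simp add: finite_subset)
  then show ?thesis
    unfolding c_star_def using assms(2) by (auto intro: Min_le)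
qed

definition proves_le :: "'a set \<Rightarrow> ('a \<Rightarrow> real set) \<Rightarrow> ('a \<Rightarrow> real) \<Rightarrow> 'a set \<Rightarrow> 'a \<Rightarrow> 'a \<Rightarrow> bool" where
  "proves_le E A w Q e f \<longleftrightarrow>
     (\<forall>w'. weight_assignment E A w' \<and> consistent w Q w' \<longrightarrow> w' e \<le> w' f)"

lemma verifies_imp_proves_le:
  assumes "verifies E indep A w Q B" "basis_of indep E (insert f (B - {e}))"
    "finite B" "e \<in> B" "f \<notin> B"
  shows "proves_le E A w Q e f"
  unfolding proves_le_def
proof (intro allI impI)
  fix w' assume "weight_assignment E A w' \<and> consistent w Q w'"
  then have "sum w' B \<le> sum w' (insert f (B - {e}))"
    using assms(1,2) unfolding verifies_def is_mwb_def by blast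
  then show "w' e \<le> w' f" using assms(3-5) by (simp add: sum_diff1)
qed

lemma proves_le_imp_le: "proves_le E A w Q e f \<Longrightarrow> weight_assignment E A w \<Longrightarrow> w e \<le> w f"
  unfolding proves_le_def consistent_def by blast

text \<open>If \<open>e\<close> were unqueried, it could be raised above its lower limit \<open>w\<^sub>e\<close>, past \<open>w\<^sub>f\<close>.\<close>

lemma proves_le_lower_in_query:
  assumes "proves_le E A w Q e f" "weight_assignment E A w" "e \<noteq> f" "e \<in> E"
    "unc_area (A e)" "\<not> trivial A w e" "w e = lower A e" "w f \<le> w e"
  shows "e \<in> Q"
proof (rule ccontr)
  assume "e \<notin> Q"
  have "w e \<in> A e" using assms(2,4) unfolding weight_assignment_def by blast
  with assms(6) obtain y where y: "y \<in> A e" "y \<noteq> w e" unfolding trivial_def by blast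
  then have "w e < y" using lower_le[of A e, OF assms(5)] assms(7) by force
  have "(w(e := y)) e \<le> (w(e := y)) f"
    using assms(1) weight_assignment_upd[OF assms(2) y(1)] consistent_upd[OF \<open>e \<notin> Q\<close>]
    unfolding proves_le_def by blast
  then show False using \<open>w e < y\<close> assms(3,8) by simp
qed

text \<open>Symmetrically, an unqueried \<open>f\<close> could be lowered below \<open>w\<^sub>e\<close>.\<close>

lemma proves_le_unqueried_lower:
  assumes "proves_le E A w Q e f" "weight_assignment E A w" "e \<noteq> f" "f \<in> E" "f \<notin> Q"
  shows "w e \<le> lower A f"
proof (rule ccontr)
  assume "\<not> w e \<le> lower A f"
  moreover have "A f \<noteq> {}" using assms(2,4) unfolding weight_assignment_def by blast
  ultimately obtain x where x: "x \<in> A f" "x < w e"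
    using cInf_lessD[of "A f" "w e"] unfolding lower_def by force
  have "(w(f := x)) e \<le> (w(f := x)) f"
    using assms(1) weight_assignment_upd[OF assms(2) x(1)] consistent_upd[OF assms(5)]
    unfolding proves_le_def by blast
  then show False using x assms(3) by simp
qed

text \<open>Lowering \<open>w'\<^sub>e\<close> to \<open>w\<^sub>e = L\<^sub>e\<close> makes \<open>w'\<close> consistent with \<open>Q\<close>, lowers every basis, and
  leaves \<open>B\<close> and \<open>B - e + f\<close> with equal weight because \<open>w'\<^sub>f = w\<^sub>f = w\<^sub>e\<close>.\<close>

lemma verifies_exchange:
  assumes ver: "verifies E indep A w Q B" and B': "basis_of indep E (insert f (B - {e}))"
    and "finite B" "e \<in> B" "f \<notin> B" "e \<in> E" "w e \<in> A e" "unc_area (A e)"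
    and "w e = lower A e" "w f = w e"
    and "Q - {e} \<subseteq> Q'" "f \<in> Q' \<or> trivial A w f"
  shows "verifies E indep A w Q' (insert f (B - {e}))"
  unfolding verifies_def
proof (intro allI impI)
  fix w' assume w': "weight_assignment E A w' \<and> consistent w Q' w'"
  define w'' where "w'' = w'(e := w e)"
  have "weight_assignment E A w''" "consistent w Q w''"
    using w' assms(7,11) unfolding weight_assignment_def consistent_def w''_def by auto
  then have mwb: "is_mwb E indep w'' B" using ver unfolding verifies_def by blast
  have "f \<in> E" using B' unfolding basis_of_def by blast
  then have "w'' f = w'' e"
    using w' assms(4,5,10,12) unfolding weight_assignment_def consistent_def trivial_def w''_def
    by auto
  have "sum w' (insert f (B - {e})) = sum w'' (insert f (B - {e}))"
    unfolding w''_def using assms(4,5) by (intro sum.cong) auto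
  also have "\<dots> = sum w'' B"
    using assms(3-5) \<open>w'' f = w'' e\<close> by (simp add: sum_diff1)
  also have "\<dots> \<le> sum w' X" if "basis_of indep E X" for X
  proof -
    have lowered: "w'' x \<le> w' x" if "x \<in> E" for x
      using w' that lower_le[of A e, OF assms(8)] assms(9)
      unfolding w''_def weight_assignment_def by auto
    have "X \<subseteq> E" using \<open>basis_of indep E X\<close> unfolding basis_of_def by blast
    then have "sum w'' X \<le> sum w' X" using lowered by (auto intro!: sum_mono)
    then show ?thesis using mwb that unfolding is_mwb_def by fastforce
  qed
  finally show "is_mwb E indep w' (insert f (B - {e}))"
    using B' unfolding is_mwb_def by blast
qed

lemma optimal_verifier_exchange:
  assumes wu: "wu_matroid E indep A w c"
    and Q: "Q \<subseteq> E" "sum c Q = c_star E indep A w c" "verifies E indep A w Q B"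
    and B': "basis_of indep E (insert f (B - {e}))" and "e \<in> B" "f \<notin> B"
    and "\<not> trivial A w e" "w e = lower A e" "w f \<le> w e"
    and cost_f: "f \<in> EL E A w (w e) \<Longrightarrow> c f \<le> c e"
  shows "\<exists>Q'. Q' \<subseteq> E \<and> sum c Q' = c_star E indep A w c \<and>
    verifies E indep A w Q' (insert f (B - {e}))"
proof -
  have fin: "finite E" using wu unfolding wu_matroid_def matroid_def by blast
  have area: "\<And>x. x \<in> E \<Longrightarrow> unc_area (A x) \<and> w x \<in> A x \<and> c x \<ge> 0"
    using wu unfolding wu_matroid_def by blast
  then have wa: "weight_assignment E A w" unfolding weight_assignment_def by blast
  have "B \<subseteq> E" using verifies_imp_basis[OF wa Q(3)] unfolding basis_of_def by blast
  then have "finite B" "e \<in> E" "f \<in> E" "e \<noteq> f"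
    using fin B' \<open>e \<in> B\<close> \<open>f \<notin> B\<close> finite_subset unfolding basis_of_def by auto
  have proves: "proves_le E A w Q e f"
    using verifies_imp_proves_le[OF Q(3) B' \<open>finite B\<close> \<open>e \<in> B\<close> \<open>f \<notin> B\<close>] .
  have "e \<in> Q"
    using proves_le_lower_in_query[OF proves wa] assms(8-10) \<open>e \<noteq> f\<close> \<open>e \<in> E\<close> area by blast
  have "w f = w e" using proves_le_imp_le[OF proves wa] assms(10) by simp
  have "unc_area (A e)" "w e \<in> A e" using area \<open>e \<in> E\<close> by auto
  define Q' where "Q' = (if f \<in> Q \<or> trivial A w f then Q - {e} else insert f (Q - {e}))"
  have "Q - {e} \<subseteq> Q'" "f \<in> Q' \<or> trivial A w f" "Q' \<subseteq> E"
    using Q(1) \<open>f \<in> E\<close> \<open>e \<noteq> f\<close> unfolding Q'_def by auto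
  then have verifies': "verifies E indep A w Q' (insert f (B - {e}))"
    using verifies_exchange[OF Q(3) B' \<open>finite B\<close> \<open>e \<in> B\<close> \<open>f \<notin> B\<close> \<open>e \<in> E\<close>
        \<open>w e \<in> A e\<close> \<open>unc_area (A e)\<close> assms(9) \<open>w f = w e\<close>] by blast
  have "sum c Q' \<le> sum c Q"
  proof -
    have "sum c (Q - {e}) = sum c Q - c e"
      using \<open>e \<in> Q\<close> Q(1) fin finite_subset by (metis sum_diff1)
    moreover have "f \<in> EL E A w (w e)" if "f \<notin> Q" "\<not> trivial A w f"
      using that proves_le_unqueried_lower[OF proves wa \<open>e \<noteq> f\<close> \<open>f \<in> E\<close>] \<open>f \<in> E\<close>
        lower_le[of A f "w f"] area \<open>w f = w e\<close> unfolding EL_def by force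
    ultimately show ?thesis
      using area[OF \<open>e \<in> E\<close>] cost_f Q(1) fin finite_subset unfolding Q'_def by fastforce
  qed
  moreover have "certificate E indep A w Q'"
    unfolding certificate_def using \<open>Q' \<subseteq> E\<close> verifies' by blast
  then have "c_star E indep A w c \<le> sum c Q'" by (rule c_star_le[OF fin])
  ultimately show ?thesis using Q(2) \<open>Q' \<subseteq> E\<close> verifies' by (intro exI[of _ Q']) simp
qed

theorem lemma18:
  fixes E :: "'a set" and indep :: "'a set \<Rightarrow> bool" and A :: "'a \<Rightarrow> real set"
    and w c :: "'a \<Rightarrow> real" and D K C :: "'a set" and e :: 'a
  assumes "wu_matroid E indep A w c"
    and "compatible_minor E indep A w c D K"
    and "e \<in> E - (D \<union> K)" and "\<not> trivial A w e"
    and "circuit_of (E - (D \<union> K)) (minor_indep E indep D K) C" and "e \<in> C"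
    and "w e = lower A e"
    and "\<forall>f\<in>C. w f \<le> w e"
    and "\<forall>f\<in>C \<inter> EL E A w (w e). c f \<le> c e"
  shows "compatible_minor E indep A w c (D \<union> {e}) K"
proof -
  obtain Q B where Q: "Q \<subseteq> E" "sum c Q = c_star E indep A w c" "verifies E indep A w Q B"
    and B: "K \<subseteq> B" "D \<inter> B = {}"
    using assms(2) unfolding compatible_minor_def by blast
  have mat: "matroid E indep" and wa: "weight_assignment E A w"
    using assms(1) unfolding wu_matroid_def weight_assignment_def by auto
  show ?thesis
  proof (cases "e \<in> B")
    case False
    then show ?thesis using Q B assms(2,3) unfolding compatible_minor_def by blast
  next
    case True
    obtain f where f: "f \<in> C - B" "basis_of indep E (insert f (B - {e}))"
      using minor_circuit_basis_exchange[OF mat verifies_imp_basis[OF wa Q(3)] B(1) assms(5,6) True]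
      by blast
    then obtain Q' where "Q' \<subseteq> E" "sum c Q' = c_star E indep A w c"
        "verifies E indep A w Q' (insert f (B - {e}))"
      using optimal_verifier_exchange[OF assms(1) Q f(2) True] assms(4,7-9) by blast
    moreover have "f \<notin> D \<union> K" using f assms(5) unfolding circuit_of_def by blast
    then have "K \<subseteq> insert f (B - {e})" "(D \<union> {e}) \<inter> insert f (B - {e}) = {}"
      using assms(3) B f(1) True by auto
    moreover have "D \<union> {e} \<subseteq> E" "K \<subseteq> E"
      using assms(2,3) unfolding compatible_minor_def by auto
    ultimately show ?thesis unfolding compatible_minor_def by blast
  qed
qed

end
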